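(* Let $s_*\in\mathbb{R}$ and let $\gamma,\delta:[s_*,\infty)\to\mathbb{R}$ be functions with $|\gamma(s)|+|\delta(s)|\le\frac{C}{s^{10}}$ for some constant $C$. Let $\phi:[s_*,\infty)\to\mathbb{R}$ be a $C^1$ solution of $\phi'=(1+\phi^2)\Big(1+\gamma(s)-\big(\tfrac1s+\delta(s)\big)\phi\Big)$. Then $\phi(s)=s-\frac1s+O(s^{-2})$ as $s\to\infty$. *)

theory Defs
  imports "HOL-Analysis.Analysis" "HOL-Library.Landau_Symbols"
begin

end

theory Submission
  imports Defs
begin

(* If h' <= -1/s wherever h > 0, then h is eventually nonpositive: while h stays positive,
   h + ln s decreases, which forces h below zero, and once nonpositive h stays so. Such barriers
   for phi - (s + 1) and arctan (s - 2) - arctan phi confine phi to the strip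
   s - 2 <= phi <= s + 1. There the equation linearises around s - 1/s as
   phi' = 1 + 1/s^2 - kappa (phi - (s - 1/s)) + O(1/s^2) with kappa >= s/2, which makes the
   curves s - 1/s +- 16/s^2 barriers as well. *)

lemma nonpos_persists:
  fixes h h' :: "real \<Rightarrow> real"
  assumes deriv: "\<And>x. x \<ge> b \<Longrightarrow> (h has_real_derivative h' x) (at x)"
    and nonincreasing: "\<And>x. x \<ge> b \<Longrightarrow> h x > 0 \<Longrightarrow> h' x \<le> 0"
    and start: "h b \<le> 0" and "b \<le> t"
  shows "h t \<le> 0"
proof (rule ccontr)
  assume "\<not> h t \<le> 0"
  then have ht: "h t > 0" by simp
  define S where "S = {b..t} \<inter> h -` {..0}"
  have cont: "continuous_on {b..t} h"
    using deriv by (intro continuous_at_imp_continuous_on ballI) (auto intro: DERIV_isCont)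
  have "closed S"
    unfolding S_def by (rule continuous_closed_preimage[OF cont]) auto
  moreover have "b \<in> S" "bdd_above S"
    using start \<open>b \<le> t\<close> by (auto simp: S_def bdd_above_def)
  ultimately have "Sup S \<in> S"
    using closed_contains_Sup by blast
  then have last_zero: "b \<le> Sup S" "Sup S < t" "h (Sup S) \<le> 0"
    using ht by (auto simp: S_def less_le)
  have pos: "h x > 0" if "Sup S < x" "x \<le> t" for x
    using that last_zero cSup_upper[OF _ \<open>bdd_above S\<close>, of x] by (force simp: S_def)
  have "h t \<le> h (Sup S)"
  proof (rule DERIV_nonpos_imp_decreasing_open[where f = h])
    show "continuous_on {Sup S..t} h"
      by (rule continuous_on_subset[OF cont]) (use last_zero in auto)
    fix x assume "Sup S < x" "x < t"
    then have "b \<le> x" "h x > 0"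
      using last_zero pos by auto
    then show "\<exists>y. (h has_real_derivative y) (at x) \<and> y \<le> 0"
      using deriv nonincreasing by blast
  qed (use last_zero in auto)
  with ht last_zero show False by linarith
qed

lemma eventually_nonpos_barrier:
  fixes h h' :: "real \<Rightarrow> real"
  assumes deriv: "\<forall>\<^sub>F x in at_top. (h has_real_derivative h' x) (at x)"
    and decay: "\<forall>\<^sub>F x in at_top. h x > 0 \<longrightarrow> h' x \<le> -1 / x"
  shows "\<forall>\<^sub>F x in at_top. h x \<le> 0"
proof -
  obtain a where a: "a > 0"
    and deriv_a: "\<And>x. x \<ge> a \<Longrightarrow> (h has_real_derivative h' x) (at x)"
    and decay_a: "\<And>x. x \<ge> a \<Longrightarrow> h x > 0 \<Longrightarrow> h' x \<le> -1 / x"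
    using eventually_conj[OF eventually_conj[OF deriv decay] eventually_gt_at_top[of 0]]
    unfolding eventually_at_top_linorder by blast
  have "\<exists>b\<ge>a. h b \<le> 0"
  proof (rule ccontr)
    assume "\<not> (\<exists>b\<ge>a. h b \<le> 0)"
    then have pos: "h x > 0" if "x \<ge> a" for x
      using that by force
    define X where "X = a * exp (h a + 1)"
    have "ln X = ln a + h a + 1" "a \<le> X"
      using a pos[of a] by (simp_all add: X_def ln_mult)
    moreover have "h X + ln X \<le> h a + ln a"
    proof (rule deriv_nonpos_imp_antimono[where g = "\<lambda>x. h x + ln x" and g' = "\<lambda>x. h' x + 1 / x"])
      fix x assume "x \<in> {a..X}"
      then show "((\<lambda>x. h x + ln x) has_real_derivative h' x + 1 / x) (at x)"
        using a deriv_a by (auto intro!: derivative_eq_intros)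
    next
      fix x assume "x \<in> {a..X}"
      then show "h' x + 1 / x \<le> 0"
        using decay_a pos by force
    qed fact
    ultimately have "h X < 0" by linarith
    with pos[of X] \<open>a \<le> X\<close> show False by simp
  qed
  then obtain b where "b \<ge> a" "h b \<le> 0" by blast
  have "h x \<le> 0" if "x \<ge> b" for x
  proof (rule nonpos_persists[of b h h'])
    fix y assume "y \<ge> b"
    with \<open>b \<ge> a\<close> show "(h has_real_derivative h' y) (at y)"
      using deriv_a by simp
    assume "h y > 0"
    with \<open>y \<ge> b\<close> \<open>b \<ge> a\<close> have "h' y \<le> -1 / y"
      using decay_a by simp
    also have "\<dots> \<le> 0"
      using \<open>y \<ge> b\<close> \<open>b \<ge> a\<close> a by simp
    finally show "h' y \<le> 0" .
  qed fact+
  then show ?thesis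
    unfolding eventually_at_top_linorder by blast
qed

lemma power_chain_ge_20:
  fixes s :: real
  assumes "s \<ge> 20"
  shows "20 * s \<le> s^2" "20 * s^2 \<le> s^3" "20 * s^3 \<le> s^4" "20 * s^4 \<le> s^5" "20 * s^5 \<le> s^6"
  using mult_right_mono[OF assms, of "s ^ n" for n] assms by (simp_all add: numeral_eq_Suc)

lemma perturbation_bound:
  fixes s y g d :: real
  assumes "s \<ge> 0" and small: "\<bar>g\<bar> + \<bar>d\<bar> \<le> 1 / s^6" and y: "\<bar>y\<bar> \<le> s + 1"
  shows "\<bar>g - d * y\<bar> \<le> (s + 1) / s^6"
proof -
  have "1 \<le> s + 1" using \<open>s \<ge> 0\<close> by linarith
  have "\<bar>g - d * y\<bar> \<le> \<bar>g\<bar> + \<bar>d\<bar> * \<bar>y\<bar>"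
    by (metis abs_mult abs_triangle_ineq4)
  also have "\<dots> \<le> \<bar>g\<bar> * (s + 1) + \<bar>d\<bar> * (s + 1)"
    using y \<open>1 \<le> s + 1\<close> by (intro add_mono mult_left_mono) (auto simp: mult_le_cancel_left1)
  also have "\<dots> = (\<bar>g\<bar> + \<bar>d\<bar>) * (s + 1)"
    by (simp add: algebra_simps)
  also have "\<dots> \<le> (s + 1) / s^6"
    using mult_right_mono[OF small, of "s + 1"] \<open>1 \<le> s + 1\<close> by simp
  finally show ?thesis .
qed

lemma perturbation_bound_half_inverse:
  fixes s y g d :: real
  assumes s: "s \<ge> 20" and small: "\<bar>g\<bar> + \<bar>d\<bar> \<le> 1 / s^6" and y: "\<bar>y\<bar> \<le> s + 1"
  shows "\<bar>g - d * y\<bar> \<le> 1 / (2 * s)"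
proof -
  have "2 * s^2 + 2 * s \<le> s^6"
    using power_chain_ge_20[OF s] s by linarith
  then have "(s + 1) / s^6 \<le> 1 / (2 * s)"
    using s by (simp add: field_simps power2_eq_square)
  with perturbation_bound[OF _ small y] s show ?thesis by linarith
qed

lemma perturbed_coefficient_pos:
  fixes s g d :: real
  assumes s: "s \<ge> 20" and small: "\<bar>g\<bar> + \<bar>d\<bar> \<le> 1 / s^6"
  shows "1 / s + d > 0"
proof -
  have "s < s^6"
    using power_chain_ge_20[OF s] s by linarith
  then have "1 / s^6 < 1 / s"
    using s by (simp add: field_simps)
  with small show ?thesis by linarith
qed

lemma riccati_rate_nonpos_above:
  fixes s y g d :: real
  assumes s: "s \<ge> 20" and small: "\<bar>g\<bar> + \<bar>d\<bar> \<le> 1 / s^6" and y: "s + 1 \<le> y"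
  shows "1 + g - (1 / s + d) * y \<le> 0"
proof -
  have "1 + g - (1 / s + d) * y \<le> 1 + g - (1 / s + d) * (s + 1)"
    using perturbed_coefficient_pos[OF s small] y by simp
  also have "\<dots> = - 1 / s + (g - d * (s + 1))"
    using s by (simp add: field_simps)
  also have "\<dots> \<le> - 1 / s + 1 / (2 * s)"
    using perturbation_bound_half_inverse[OF s small, of "s + 1"] s by simp
  also have "\<dots> \<le> 0"
    using s by simp
  finally show ?thesis .
qed

lemma riccati_rate_ge_below:
  fixes s y g d :: real
  assumes s: "s \<ge> 20" and small: "\<bar>g\<bar> + \<bar>d\<bar> \<le> 1 / s^6" and y: "y \<le> s - 2"
  shows "1 / (1 + (s - 2)^2) + 1 / s \<le> 1 + g - (1 / s + d) * y"
proof -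
  have "2 * s \<le> 1 + (s - 2)^2"
    using power_chain_ge_20[OF s] s by (simp add: power2_diff)
  then have "1 / (1 + (s - 2)^2) \<le> 1 / (2 * s)"
    using s by (intro divide_left_mono) auto
  moreover have "1 / (2 * s) + 1 / s = 2 / s - 1 / (2 * s)"
    using s by (simp add: field_simps)
  ultimately have "1 / (1 + (s - 2)^2) + 1 / s \<le> 2 / s - 1 / (2 * s)"
    by linarith
  also have "\<dots> \<le> 2 / s + (g - d * (s - 2))"
    using perturbation_bound_half_inverse[OF s small, of "s - 2"] s by simp
  also have "\<dots> = 1 + g - (1 / s + d) * (s - 2)"
    using s by (simp add: field_simps)
  also have "\<dots> \<le> 1 + g - (1 / s + d) * y"
    using perturbed_coefficient_pos[OF s small] y by simp
  finally show ?thesis .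
qed

lemma perturbation_term_bound:
  fixes s y g d :: real
  assumes s: "s \<ge> 20" and small: "\<bar>g\<bar> + \<bar>d\<bar> \<le> 1 / s^6" and y: "\<bar>y\<bar> \<le> s + 1"
  shows "\<bar>(1 + y^2) * (g - d * y)\<bar> \<le> 1 / s^2"
proof -
  have "1 + y^2 \<le> 1 + (s + 1)^2"
    using y by (metis abs_ge_zero add_left_mono power2_abs power_mono)
  have "(1 + (s + 1)^2) * (s + 1) = s^3 + 3 * s^2 + 4 * s + 2"
    by (simp add: algebra_simps power2_eq_square power3_eq_cube)
  also have "\<dots> \<le> s^4"
    using power_chain_ge_20[OF s] s by linarith
  finally have "(1 + (s + 1)^2) * (s + 1) \<le> s^4" .
  have "\<bar>(1 + y^2) * (g - d * y)\<bar> = (1 + y^2) * \<bar>g - d * y\<bar>"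
    by (simp add: abs_mult)
  also have "\<dots> \<le> (1 + (s + 1)^2) * ((s + 1) / s^6)"
    using \<open>1 + y^2 \<le> 1 + (s + 1)^2\<close> perturbation_bound[OF _ small y] s
    by (intro mult_mono) auto
  also have "\<dots> \<le> s^4 / s^6"
    using \<open>(1 + (s + 1)^2) * (s + 1) \<le> s^4\<close> s by (simp add: divide_right_mono)
  also have "\<dots> = 1 / s^2"
    using s by (simp add: field_simps power_add[symmetric])
  finally show ?thesis .
qed

lemma riccati_linearisation:
  fixes s y g d :: real
  assumes s: "s \<ge> 20" and small: "\<bar>g\<bar> + \<bar>d\<bar> \<le> 1 / s^6" and y: "s - 2 \<le> y" "y \<le> s + 1"
  shows "\<exists>\<kappa> \<ge> s / 2. \<bar>(1 + y^2) * (1 + g - (1 / s + d) * y) - (1 + 1 / s^2) + \<kappa> * (y - (s - 1 / s))\<bar>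
    \<le> 4 / s^2"
proof -
  define \<kappa> where "\<kappa> = (1 + y^2) / s - (y + s) / s^2"
  have "(1 + y^2) * (1 + g - (1 / s + d) * y) - (1 + 1 / s^2) + \<kappa> * (y - (s - 1 / s))
      = (1 + y^2) * (g - d * y) - (y + s) / s^3"
    using s by (simp add: \<kappa>_def field_simps power2_eq_square power3_eq_cube)
  moreover have "\<bar>(1 + y^2) * (g - d * y)\<bar> \<le> 1 / s^2"
    using perturbation_term_bound[OF s small] y s by simp
  moreover have "0 \<le> (y + s) / s^3" "(y + s) / s^3 \<le> 3 / s^2"
    using y s by (simp_all add: field_simps power2_eq_square power3_eq_cube)
  ultimately have "\<bar>(1 + y^2) * (1 + g - (1 / s + d) * y) - (1 + 1 / s^2) + \<kappa> * (y - (s - 1 / s))\<bar>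
      \<le> 4 / s^2"
    by (simp add: abs_le_iff)
  moreover have "s / 2 \<le> \<kappa>"
  proof -
    have "(s - 2)^2 \<le> y^2"
      using y s by (intro power_mono) auto
    moreover have "(y + s) / s \<le> 3"
      using y s by (simp add: field_simps)
    moreover have "s * \<kappa> = 1 + y^2 - (y + s) / s"
      using s by (simp add: \<kappa>_def field_simps power2_eq_square)
    ultimately have "(s - 2)^2 - 2 \<le> s * \<kappa>"
      by linarith
    moreover have "s^2 / 2 \<le> (s - 2)^2 - 2"
      using power_chain_ge_20[OF s] s by (simp add: power2_diff)
    ultimately have "s * (s / 2) \<le> s * \<kappa>"
      by (simp add: power2_eq_square)
    then show ?thesis
      using s by simp
  qed
  ultimately show ?thesis by blast
qed

lemma fine_barrier_margin:
  fixes s :: real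
  assumes s: "s \<ge> 20"
  shows "4 / s^2 + 32 / s^3 \<le> 7 / s"
proof -
  have "4 / s^2 + 32 / s^3 = (4 * s + 32) / s^3"
    using s by (simp add: field_simps power2_eq_square power3_eq_cube)
  also have "\<dots> \<le> 7 * s^2 / s^3"
    using power_chain_ge_20[OF s] s by (intro divide_right_mono) auto
  also have "\<dots> = 7 / s"
    using s by (simp add: power2_eq_square power3_eq_cube)
  finally show ?thesis .
qed

lemma riccati_rate_above_expansion:
  fixes s y g d :: real
  assumes s: "s \<ge> 20" and small: "\<bar>g\<bar> + \<bar>d\<bar> \<le> 1 / s^6" and y: "s - 2 \<le> y" "y \<le> s + 1"
    and above: "s - 1 / s + 16 / s^2 < y"
  shows "(1 + y^2) * (1 + g - (1 / s + d) * y) - (1 + 1 / s^2 - 32 / s^3) \<le> -1 / s"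
proof -
  obtain \<kappa> where "\<kappa> \<ge> s / 2"
    and linear: "\<bar>(1 + y^2) * (1 + g - (1 / s + d) * y) - (1 + 1 / s^2) + \<kappa> * (y - (s - 1 / s))\<bar>
      \<le> 4 / s^2"
    using riccati_linearisation[OF s small y] by blast
  have "s / 2 * (16 / s^2) \<le> \<kappa> * (y - (s - 1 / s))"
    using \<open>\<kappa> \<ge> s / 2\<close> above s by (intro mult_mono) auto
  moreover have "s / 2 * (16 / s^2) = 8 / s"
    using s by (simp add: power2_eq_square)
  ultimately show ?thesis
    using linear fine_barrier_margin[OF s] by (simp add: abs_le_iff)
qed

lemma riccati_rate_below_expansion:
  fixes s y g d :: real
  assumes s: "s \<ge> 20" and small: "\<bar>g\<bar> + \<bar>d\<bar> \<le> 1 / s^6" and y: "s - 2 \<le> y" "y \<le> s + 1"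
    and below: "y < s - 1 / s - 16 / s^2"
  shows "(1 + 1 / s^2 + 32 / s^3) - (1 + y^2) * (1 + g - (1 / s + d) * y) \<le> -1 / s"
proof -
  obtain \<kappa> where "\<kappa> \<ge> s / 2"
    and linear: "\<bar>(1 + y^2) * (1 + g - (1 / s + d) * y) - (1 + 1 / s^2) + \<kappa> * (y - (s - 1 / s))\<bar>
      \<le> 4 / s^2"
    using riccati_linearisation[OF s small y] by blast
  have "s / 2 * (16 / s^2) \<le> \<kappa> * ((s - 1 / s) - y)"
    using \<open>\<kappa> \<ge> s / 2\<close> below s by (intro mult_mono) auto
  moreover have "s / 2 * (16 / s^2) = 8 / s"
    using s by (simp add: power2_eq_square)
  ultimately show ?thesis
    using linear fine_barrier_margin[OF s] by (simp add: abs_le_iff algebra_simps)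
qed

locale riccati_solution =
  fixes \<gamma> \<delta> \<phi> \<phi>' :: "real \<Rightarrow> real"
  assumes small: "\<forall>\<^sub>F s in at_top. \<bar>\<gamma> s\<bar> + \<bar>\<delta> s\<bar> \<le> 1 / s^6"
    and has_deriv: "\<forall>\<^sub>F s in at_top. (\<phi> has_real_derivative \<phi>' s) (at s)"
    and ode: "\<forall>\<^sub>F s in at_top. \<phi>' s = (1 + (\<phi> s)^2) * (1 + \<gamma> s - (1 / s + \<delta> s) * \<phi> s)"
begin

lemma eventually_le_barrier:
  assumes "\<forall>\<^sub>F s in at_top. (b has_real_derivative b' s) (at s)"
    and "\<forall>\<^sub>F s in at_top. \<phi> s > b s \<longrightarrow> \<phi>' s - b' s \<le> -1 / s"
  shows "\<forall>\<^sub>F s in at_top. \<phi> s \<le> b s"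
proof -
  have "\<forall>\<^sub>F s in at_top. \<phi> s - b s \<le> 0"
  proof (rule eventually_nonpos_barrier)
    show "\<forall>\<^sub>F s in at_top. ((\<lambda>s. \<phi> s - b s) has_real_derivative \<phi>' s - b' s) (at s)"
      using has_deriv assms(1) by eventually_elim (rule derivative_intros)
  qed (use assms(2) in simp)
  then show ?thesis by eventually_elim simp
qed

lemma eventually_ge_barrier:
  assumes "\<forall>\<^sub>F s in at_top. (b has_real_derivative b' s) (at s)"
    and "\<forall>\<^sub>F s in at_top. \<phi> s < b s \<longrightarrow> b' s - \<phi>' s \<le> -1 / s"
  shows "\<forall>\<^sub>F s in at_top. b s \<le> \<phi> s"
proof -
  have "\<forall>\<^sub>F s in at_top. b s - \<phi> s \<le> 0"
  proof (rule eventually_nonpos_barrier)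
    show "\<forall>\<^sub>F s in at_top. ((\<lambda>s. b s - \<phi> s) has_real_derivative b' s - \<phi>' s) (at s)"
      using has_deriv assms(1) by eventually_elim (rule derivative_intros)
  qed (use assms(2) in simp)
  then show ?thesis by eventually_elim simp
qed

lemma eventually_le_plus_one: "\<forall>\<^sub>F s in at_top. \<phi> s \<le> s + 1"
proof (rule eventually_le_barrier[where b' = "\<lambda>_. 1"])
  show "\<forall>\<^sub>F s in at_top. ((\<lambda>s. s + 1) has_real_derivative 1) (at s)"
    by (intro always_eventually allI) (auto intro!: derivative_eq_intros)
  show "\<forall>\<^sub>F s in at_top. \<phi> s > s + 1 \<longrightarrow> \<phi>' s - 1 \<le> -1 / s"
    using small ode eventually_ge_at_top[of "20::real"]
  proof eventually_elim
    case (elim s)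
    have "\<phi>' s \<le> 0" if "\<phi> s > s + 1"
      using riccati_rate_nonpos_above[of s "\<gamma> s" "\<delta> s" "\<phi> s"] that elim
      by (simp add: mult_nonneg_nonpos)
    moreover have "1 / s \<le> 1"
      using elim by simp
    ultimately show ?case by auto
  qed
qed

text \<open>Comparing \<open>\<phi>\<close> with \<open>s - 2\<close> directly fails near \<open>\<phi> = 0\<close>, where \<open>\<phi>'\<close> is only about \<open>1\<close>.
  The derivative of \<open>arctan \<phi>\<close> is the rate \<open>1 + \<gamma> - (1/s + \<delta>) \<phi>\<close> itself, which below \<open>s - 2\<close>
  exceeds the slope of \<open>arctan (s - 2)\<close> by \<open>1/s\<close>.\<close>

lemma eventually_ge_minus_two: "\<forall>\<^sub>F s in at_top. s - 2 \<le> \<phi> s"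
proof -
  have "\<forall>\<^sub>F s in at_top. arctan (s - 2) - arctan (\<phi> s) \<le> 0"
  proof (rule eventually_nonpos_barrier)
    show "\<forall>\<^sub>F s in at_top. ((\<lambda>s. arctan (s - 2) - arctan (\<phi> s)) has_real_derivative
        1 / (1 + (s - 2)^2) - (1 + \<gamma> s - (1 / s + \<delta> s) * \<phi> s)) (at s)"
      using has_deriv ode
    proof eventually_elim
      case (elim s)
      have "1 + (\<phi> s)^2 > 0"
        by (simp add: add_pos_nonneg)
      with elim show ?case
        by (auto intro!: derivative_eq_intros simp: field_simps)
    qed
    show "\<forall>\<^sub>F s in at_top. arctan (s - 2) - arctan (\<phi> s) > 0 \<longrightarrow>
        1 / (1 + (s - 2)^2) - (1 + \<gamma> s - (1 / s + \<delta> s) * \<phi> s) \<le> -1 / s"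
      using small eventually_ge_at_top[of "20::real"]
    proof eventually_elim
      case (elim s)
      show ?case
      proof
        assume "arctan (s - 2) - arctan (\<phi> s) > 0"
        then have "\<phi> s \<le> s - 2"
          by (simp add: arctan_less_iff)
        then show "1 / (1 + (s - 2)^2) - (1 + \<gamma> s - (1 / s + \<delta> s) * \<phi> s) \<le> -1 / s"
          using riccati_rate_ge_below elim by fastforce
      qed
    qed
  qed
  then show ?thesis by eventually_elim (simp add: arctan_le_iff)
qed

lemma eventually_le_expansion: "\<forall>\<^sub>F s in at_top. \<phi> s \<le> s - 1 / s + 16 / s^2"
proof (rule eventually_le_barrier[where b' = "\<lambda>s. 1 + 1 / s^2 - 32 / s^3"])
  show "\<forall>\<^sub>F s in at_top.
      ((\<lambda>s. s - 1 / s + 16 / s^2) has_real_derivative 1 + 1 / s^2 - 32 / s^3) (at s)"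
    using eventually_gt_at_top[of 0]
    by eventually_elim
      (auto intro!: derivative_eq_intros simp: field_simps power2_eq_square power3_eq_cube)
  show "\<forall>\<^sub>F s in at_top.
      \<phi> s > s - 1 / s + 16 / s^2 \<longrightarrow> \<phi>' s - (1 + 1 / s^2 - 32 / s^3) \<le> -1 / s"
    using small ode eventually_le_plus_one eventually_ge_minus_two
      eventually_ge_at_top[of "20::real"]
    by eventually_elim (use riccati_rate_above_expansion in auto)
qed

lemma eventually_ge_expansion: "\<forall>\<^sub>F s in at_top. s - 1 / s - 16 / s^2 \<le> \<phi> s"
proof (rule eventually_ge_barrier[where b' = "\<lambda>s. 1 + 1 / s^2 + 32 / s^3"])
  show "\<forall>\<^sub>F s in at_top.
      ((\<lambda>s. s - 1 / s - 16 / s^2) has_real_derivative 1 + 1 / s^2 + 32 / s^3) (at s)"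
    using eventually_gt_at_top[of 0]
    by eventually_elim
      (auto intro!: derivative_eq_intros simp: field_simps power2_eq_square power3_eq_cube)
  show "\<forall>\<^sub>F s in at_top.
      \<phi> s < s - 1 / s - 16 / s^2 \<longrightarrow> (1 + 1 / s^2 + 32 / s^3) - \<phi>' s \<le> -1 / s"
    using small ode eventually_le_plus_one eventually_ge_minus_two
      eventually_ge_at_top[of "20::real"]
    by eventually_elim (use riccati_rate_below_expansion in auto)
qed

lemma asymptotic_expansion: "(\<lambda>s. \<phi> s - (s - 1 / s)) \<in> O(\<lambda>s. 1 / s^2)"
proof (rule bigoI[where c = 16])
  show "\<forall>\<^sub>F s in at_top. norm (\<phi> s - (s - 1 / s)) \<le> 16 * norm (1 / s^2)"
    using eventually_le_expansion eventually_ge_expansion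
    by eventually_elim (simp add: abs_le_iff)
qed

end

lemma eventually_le_inverse_power:
  fixes f :: "real \<Rightarrow> real"
  assumes "\<forall>s\<ge>s0. f s \<le> C / s ^ (m + n)" and "n \<ge> 1"
  shows "\<forall>\<^sub>F s in at_top. f s \<le> 1 / s ^ m"
  using eventually_ge_at_top[of s0] eventually_ge_at_top[of "max 1 C"]
proof eventually_elim
  case (elim s)
  have "C \<le> s ^ n"
    using elim power_increasing[of 1 n s] \<open>n \<ge> 1\<close> by simp
  then have "C / s ^ (m + n) \<le> s ^ n / s ^ (m + n)"
    using elim by (intro divide_right_mono) auto
  also have "\<dots> = 1 / s ^ m"
    using elim by (simp add: power_add)
  finally show ?case
    using assms(1) elim by fastforce
qed

lemma eventually_has_real_derivative_at:
  assumes "\<forall>s\<ge>s0. (f has_real_derivative f' s) (at s within {s0..})"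
  shows "\<forall>\<^sub>F s in at_top. (f has_real_derivative f' s) (at s)"
  using eventually_gt_at_top[of s0]
proof eventually_elim
  case (elim s)
  have "(f has_real_derivative f' s) (at s within {s0..})"
    using assms elim by simp
  moreover have "at s within {s0..} = at s"
    using elim by (intro at_within_open_subset[of _ "{s0<..}"]) auto
  ultimately show ?case
    by simp
qed

theorem lemma2p6:
  fixes s0 C :: real and \<gamma> \<delta> \<phi> \<phi>' :: "real \<Rightarrow> real"
  assumes bound: "\<forall>s\<ge>s0. \<bar>\<gamma> s\<bar> + \<bar>\<delta> s\<bar> \<le> C / s ^ 10"
    and deriv: "\<forall>s\<ge>s0. (\<phi> has_real_derivative \<phi>' s) (at s within {s0..})"
    and cont: "continuous_on {s0..} \<phi>'"
    and ode: "\<forall>s\<ge>s0. \<phi>' s = (1 + (\<phi> s)^2) * (1 + \<gamma> s - (1 / s + \<delta> s) * \<phi> s)"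
  shows "(\<lambda>s. \<phi> s - (s - 1 / s)) \<in> O[at_top](\<lambda>s. 1 / s ^ 2)"
proof -
  interpret riccati_solution \<gamma> \<delta> \<phi> \<phi>'
  proof
    show "\<forall>\<^sub>F s in at_top. \<bar>\<gamma> s\<bar> + \<bar>\<delta> s\<bar> \<le> 1 / s^6"
      using eventually_le_inverse_power[of s0 _ C 6 4] bound by simp
    show "\<forall>\<^sub>F s in at_top. (\<phi> has_real_derivative \<phi>' s) (at s)"
      using eventually_has_real_derivative_at[OF deriv] .
    show "\<forall>\<^sub>F s in at_top. \<phi>' s = (1 + (\<phi> s)^2) * (1 + \<gamma> s - (1 / s + \<delta> s) * \<phi> s)"
      using eventually_ge_at_top[of s0] by eventually_elim (use ode in auto)
  qed
  show ?thesis
    by (rule asymptotic_expansion)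
qed

end
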